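(* Let $H$ be a connected graph with vertices $v_1,\ldots,v_d$, let $\Gamma$ be a finite group with identity $e$, and let $D=\{\gamma_1,\ldots,\gamma_d\}\subseteq\Gamma$ with $|D|=d$. Let $\widetilde{H}$ be the graph with vertex set $\Gamma$ and edge set $\{(\gamma\gamma_i,\gamma\gamma_j): \gamma\in\Gamma,\ v_iv_j\in E(H)\}$, and for $\gamma\in\Gamma$ let $\widetilde{H}_\gamma$ be the subgraph of $\widetilde{H}$ induced by $\{\gamma\gamma_1,\ldots,\gamma\gamma_d\}$. Then: a) If $(\Gamma,D)$ satisfies condition $\mathcal{G}(2)$ then $\widetilde{H}$ is a cluster of $|\Gamma|$ copies of $H$ (namely of the subgraphs $\widetilde{H}_\gamma$, $\gamma\in\Gamma$). b) If $(\Gamma,D)$ satisfies condition $\mathcal{G}(p)$ then the cluster-girth of $\widetilde{H}$ (with respect to the parts $\widetilde{H}_\gamma$, $\gamma\in\Gamma$) is at least $p+1$. c) The connected components of $\widetilde{H}$ are pairwise isomorphic, and the component containing $e$ is a Cayley graph of some subgroup of $\Gamma$.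
   Context: For $p\geq 1$, the pair $(\Gamma,D)$ satisfies condition $\mathcal{R}(p)$ if for every sequence of indices $i_0,\ldots,i_{2p-1}\in\{1,\ldots,d\}$ the equality $\gamma_{i_0}\gamma_{i_1}^{-1}\gamma_{i_2}\gamma_{i_3}^{-1}\cdots\gamma_{i_{2p-2}}\gamma_{i_{2p-1}}^{-1}=e$ implies $i_l=i_{l+1}$ for some $l\in\{0,\ldots,2p-1\}$ (indices modulo $2p$). It satisfies $\mathcal{G}(p)$ if it satisfies $\mathcal{R}(1),\ldots,\mathcal{R}(p)$. A finite graph $X$ is a cluster of induced subgraphs $X_1,\ldots,X_k$ (its parts) if $X=X_1\cup\cdots\cup X_k$ and for all $i\neq j$, $X_i\cap X_j$ is empty or a single vertex. The cluster-girth (with respect to parts $X_1,\ldots,X_k$) is the smallest $l\geq 3$ such that there exist pairwise distinct vertices $v_0,\ldots,v_{l-1}$ and pairwise distinct indices $i_0,\ldots,i_{l-1}$ with $v_j\in V(X_{i_{j-1}})\cap V(X_{i_j})$ for $j=0,\ldots,l-1$ (indices modulo $l$); it is infinite if no such cycle exists. *)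

theory Defs
  imports "HOL-Algebra.Group" "HOL-Library.Extended_Nat"
begin

text \<open>The base graph H has vertices 0..<d (standing for v_1..v_d) and a symmetric,
irreflexive edge relation E with all edges inside {..<d}.  The set D is given by an
injective map g : {..<d} -> carrier G (g i standing for gamma_(i+1)).\<close>

definition simple_graph_on :: "nat \<Rightarrow> (nat \<Rightarrow> nat \<Rightarrow> bool) \<Rightarrow> bool" where
  "simple_graph_on d E \<longleftrightarrow>
     (\<forall>i j. E i j \<longrightarrow> i < d \<and> j < d) \<and> (\<forall>i j. E i j \<longrightarrow> E j i) \<and> (\<forall>i. \<not> E i i)"

definition connected_graph_on :: "nat \<Rightarrow> (nat \<Rightarrow> nat \<Rightarrow> bool) \<Rightarrow> bool" where
  "connected_graph_on d E \<longleftrightarrow> 0 < d \<and> (\<forall>i<d. \<forall>j<d. E\<^sup>*\<^sup>* i j)"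

definition alt_prod :: "('a, 'b) monoid_scheme \<Rightarrow> (nat \<Rightarrow> 'a) \<Rightarrow> (nat \<Rightarrow> nat) \<Rightarrow> nat \<Rightarrow> 'a" where
  "alt_prod G g idx p =
     foldr (\<lambda>k acc. g (idx (2*k)) \<otimes>\<^bsub>G\<^esub> inv\<^bsub>G\<^esub> (g (idx (2*k+1))) \<otimes>\<^bsub>G\<^esub> acc) [0..<p] \<one>\<^bsub>G\<^esub>"

definition cond_R :: "('a, 'b) monoid_scheme \<Rightarrow> (nat \<Rightarrow> 'a) \<Rightarrow> nat \<Rightarrow> nat \<Rightarrow> bool" where
  "cond_R G g d p \<longleftrightarrow>
     (\<forall>idx. (\<forall>l<2*p. idx l < d) \<longrightarrow> alt_prod G g idx p = \<one>\<^bsub>G\<^esub> \<longrightarrow>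
        (\<exists>l<2*p. idx l = idx ((l + 1) mod (2*p))))"

definition cond_G :: "('a, 'b) monoid_scheme \<Rightarrow> (nat \<Rightarrow> 'a) \<Rightarrow> nat \<Rightarrow> nat \<Rightarrow> bool" where
  "cond_G G g d p \<longleftrightarrow> (\<forall>q. 1 \<le> q \<and> q \<le> p \<longrightarrow> cond_R G g d q)"

definition lift_edges :: "('a, 'b) monoid_scheme \<Rightarrow> (nat \<Rightarrow> 'a) \<Rightarrow> nat \<Rightarrow> (nat \<Rightarrow> nat \<Rightarrow> bool) \<Rightarrow> 'a \<Rightarrow> 'a \<Rightarrow> bool" where
  "lift_edges G g d E x y \<longleftrightarrow>
     (\<exists>\<gamma>\<in>carrier G. \<exists>i<d. \<exists>j<d. E i j \<and> x = \<gamma> \<otimes>\<^bsub>G\<^esub> g i \<and> y = \<gamma> \<otimes>\<^bsub>G\<^esub> g j)"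

text \<open>Vertex set of H-tilde_gamma (an induced subgraph, determined by its vertex set).\<close>
definition part :: "('a, 'b) monoid_scheme \<Rightarrow> (nat \<Rightarrow> 'a) \<Rightarrow> nat \<Rightarrow> 'a \<Rightarrow> 'a set" where
  "part G g d \<gamma> = (\<lambda>i. \<gamma> \<otimes>\<^bsub>G\<^esub> g i) ` {..<d}"

definition graph_iso :: "'u set \<Rightarrow> ('u \<Rightarrow> 'u \<Rightarrow> bool) \<Rightarrow> 'v set \<Rightarrow> ('v \<Rightarrow> 'v \<Rightarrow> bool) \<Rightarrow> bool" where
  "graph_iso V1 E1 V2 E2 \<longleftrightarrow>
     (\<exists>f. bij_betw f V1 V2 \<and> (\<forall>x\<in>V1. \<forall>y\<in>V1. E1 x y \<longleftrightarrow> E2 (f x) (f y)))"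

definition is_cluster :: "'v set \<Rightarrow> ('v \<Rightarrow> 'v \<Rightarrow> bool) \<Rightarrow> 'i set \<Rightarrow> ('i \<Rightarrow> 'v set) \<Rightarrow> bool" where
  "is_cluster V E I X \<longleftrightarrow>
     (\<forall>i\<in>I. X i \<subseteq> V) \<and> V = (\<Union>i\<in>I. X i) \<and>
     (\<forall>x y. E x y \<longrightarrow> (\<exists>i\<in>I. x \<in> X i \<and> y \<in> X i)) \<and>
     (\<forall>i\<in>I. \<forall>j\<in>I. i \<noteq> j \<longrightarrow> X i \<inter> X j = {} \<or> (\<exists>v. X i \<inter> X j = {v}))"

definition cluster_cycle :: "'i set \<Rightarrow> ('i \<Rightarrow> 'v set) \<Rightarrow> nat \<Rightarrow> bool" where
  "cluster_cycle I X l \<longleftrightarrow>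
     (\<exists>v c. inj_on v {..<l} \<and> inj_on c {..<l} \<and>
        (\<forall>j<l. c j \<in> I \<and> v j \<in> X (c ((j + l - 1) mod l)) \<and> v j \<in> X (c j)))"

definition cluster_girth :: "'i set \<Rightarrow> ('i \<Rightarrow> 'v set) \<Rightarrow> enat" where
  "cluster_girth I X = (INF l\<in>{l. 3 \<le> l \<and> cluster_cycle I X l}. enat l)"

definition component :: "('v \<Rightarrow> 'v \<Rightarrow> bool) \<Rightarrow> 'v \<Rightarrow> 'v set" where
  "component E x = {y. E\<^sup>*\<^sup>* x y}"

definition is_cayley_graph :: "('a, 'b) monoid_scheme \<Rightarrow> 'a set \<Rightarrow> 'a set \<Rightarrow> 'a set \<Rightarrow> ('a \<Rightarrow> 'a \<Rightarrow> bool) \<Rightarrow> bool" where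
  "is_cayley_graph G K S V E \<longleftrightarrow>
     subgroup K G \<and> S \<subseteq> K \<and> \<one>\<^bsub>G\<^esub> \<notin> S \<and> (\<forall>s\<in>S. inv\<^bsub>G\<^esub> s \<in> S) \<and> V = K \<and>
     (\<forall>x\<in>K. \<forall>y\<in>K. E x y \<longleftrightarrow> inv\<^bsub>G\<^esub> x \<otimes>\<^bsub>G\<^esub> y \<in> S)"

end

theory Submission
  imports Defs
begin

text \<open>
  Left multiplication is an automorphism of the lifted graph.  Hence all components are
  isomorphic, and the component K of the identity is a subgroup in which adjacency of x and y
  depends only on x^-1 y, which must lie in S = {g_i^-1 g_j | v_i v_j in E(H)}.

  Suppose the parts of c_1, ..., c_l form a cluster cycle through the vertices
  v_k = c_(k-1) g_(a_k) = c_k g_(b_k).  Then g_(a_k) g_(b_k)^-1 = c_(k-1)^-1 c_k, so the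
  alternating product g_(a_1) g_(b_1)^-1 ... g_(a_l) g_(b_l)^-1 telescopes to e; on the other
  hand a_k = b_k would force c_(k-1) = c_k, and b_k = a_(k+1) would force v_k = v_(k+1).
  So R(l) excludes cluster cycles of length l; for l = 2 this says that two distinct parts
  share at most one vertex.
\<close>

definition interleave :: "(nat \<Rightarrow> 'b) \<Rightarrow> (nat \<Rightarrow> 'b) \<Rightarrow> nat \<Rightarrow> 'b" where
  "interleave a b m = (if even m then a (m div 2) else b (m div 2))"

lemma interleave_adjacent_neq:
  assumes "\<And>k. k < l \<Longrightarrow> a k \<noteq> b k"
    and "\<And>k. k < l \<Longrightarrow> b k \<noteq> a (Suc k mod l)"
    and "m < 2 * l"
  shows "interleave a b m \<noteq> interleave a b ((m + 1) mod (2 * l))"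
proof (cases "even m")
  case True
  then obtain k where "m = 2 * k" by blast
  with assms show ?thesis unfolding interleave_def by auto
next
  case False
  then obtain k where k: "m = 2 * k + 1" using oddE by blast
  with assms(3) have kl: "k < l" by simp
  have "(m + 1) mod (2 * l) = 2 * (Suc k mod l)"
    using k kl by (cases "Suc k < l") (auto simp: mod_mult_mult1[symmetric])
  with k kl assms(2) show ?thesis unfolding interleave_def by simp
qed

lemma pred_mod_neq:
  fixes k l :: nat
  assumes "2 \<le> l" "k < l"
  shows "(k + l - 1) mod l \<noteq> k"
  using assms by (cases k) auto

lemma Suc_mod_neq:
  fixes k l :: nat
  assumes "2 \<le> l" "k < l"
  shows "Suc k mod l \<noteq> k"
proof (cases "Suc k < l")
  case False
  with assms have "Suc k = l" by simp
  with assms show ?thesis by auto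
qed simp

lemma (in group) mult_eq_imp_quotients_eq:
  assumes "a \<in> carrier G" "b \<in> carrier G" "x \<in> carrier G" "y \<in> carrier G"
    and "a \<otimes> x = b \<otimes> y"
  shows "inv b \<otimes> a = y \<otimes> inv x"
proof -
  have "a = b \<otimes> (y \<otimes> inv x)"
    using assms inv_solve_right[of a "b \<otimes> y" x] by (simp add: m_assoc)
  with assms show ?thesis using inv_solve_left'[of "y \<otimes> inv x" b a] by simp
qed

locale lifted_graph = group G for G (structure) +
  fixes g :: "nat \<Rightarrow> 'a" and d :: nat and E :: "nat \<Rightarrow> nat \<Rightarrow> bool"
  assumes gens_closed: "g ` {..<d} \<subseteq> carrier G"
begin

abbreviation lifted :: "'a \<Rightarrow> 'a \<Rightarrow> bool" where
  "lifted \<equiv> lift_edges G g d E"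

lemma gen_closed [simp]: "i < d \<Longrightarrow> g i \<in> carrier G"
  using gens_closed by auto

lemma lifted_iff:
  "lifted x y \<longleftrightarrow> x \<in> carrier G \<and> (\<exists>i<d. \<exists>j<d. E i j \<and> y = x \<otimes> inv (g i) \<otimes> g j)"
proof
  assume "lifted x y"
  then obtain \<gamma> i j where h: "\<gamma> \<in> carrier G" "i < d" "j < d" "E i j"
    "x = \<gamma> \<otimes> g i" "y = \<gamma> \<otimes> g j"
    unfolding lift_edges_def by blast
  then have "x \<in> carrier G" "y = x \<otimes> inv (g i) \<otimes> g j" by (simp_all add: m_assoc)
  with h show "x \<in> carrier G \<and> (\<exists>i<d. \<exists>j<d. E i j \<and> y = x \<otimes> inv (g i) \<otimes> g j)" by blast
next
  assume "x \<in> carrier G \<and> (\<exists>i<d. \<exists>j<d. E i j \<and> y = x \<otimes> inv (g i) \<otimes> g j)"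
  then obtain i j where h: "x \<in> carrier G" "i < d" "j < d" "E i j" "y = x \<otimes> inv (g i) \<otimes> g j"
    by blast
  then have "x = (x \<otimes> inv (g i)) \<otimes> g i" by (simp add: m_assoc)
  with h show "lifted x y" unfolding lift_edges_def
    by (intro bexI[of _ "x \<otimes> inv (g i)"]) auto
qed

lemma lifted_closed:
  assumes "lifted x y"
  shows "x \<in> carrier G" "y \<in> carrier G"
  using assms unfolding lifted_iff by auto

lemma lifted_mult_left_iff:
  assumes "a \<in> carrier G" "x \<in> carrier G" "y \<in> carrier G"
  shows "lifted (a \<otimes> x) (a \<otimes> y) \<longleftrightarrow> lifted x y"
proof -
  have "a \<otimes> y = a \<otimes> x \<otimes> inv (g i) \<otimes> g j \<longleftrightarrow> y = x \<otimes> inv (g i) \<otimes> g j"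
    if "i < d" "j < d" for i j
    using assms that by (simp add: m_assoc)
  with assms show ?thesis unfolding lifted_iff by auto
qed

lemma lifted_sym:
  assumes "\<And>i j. E i j \<Longrightarrow> E j i" and "lifted x y"
  shows "lifted y x"
  using assms unfolding lift_edges_def by blast

lemma reachable_closed:
  assumes "lifted\<^sup>*\<^sup>* x y" and "x \<in> carrier G"
  shows "y \<in> carrier G"
  using assms by induction (auto dest: lifted_closed)

lemma reachable_mult_left:
  assumes "lifted\<^sup>*\<^sup>* x y" and "x \<in> carrier G" and a: "a \<in> carrier G"
  shows "lifted\<^sup>*\<^sup>* (a \<otimes> x) (a \<otimes> y)"
  using assms(1,2)
proof induction
  case (step y z)
  then have "lifted (a \<otimes> y) (a \<otimes> z)"
    using lifted_mult_left_iff[OF a] reachable_closed lifted_closed by blast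
  with step show ?case by (meson rtranclp.rtrancl_into_rtrancl)
qed simp

lemma reachable_sym:
  assumes "\<And>i j. E i j \<Longrightarrow> E j i" and "lifted\<^sup>*\<^sup>* x y"
  shows "lifted\<^sup>*\<^sup>* y x"
  using assms(2)
proof induction
  case (step y z)
  then show ?case using lifted_sym[OF assms(1) step(2)]
    by (meson converse_rtranclp_into_rtranclp)
qed simp

lemma component_subset_carrier: "x \<in> carrier G \<Longrightarrow> component lifted x \<subseteq> carrier G"
  unfolding component_def using reachable_closed by blast

lemma mult_left_component:
  assumes "a \<in> carrier G" "x \<in> carrier G"
  shows "(\<otimes>) a ` component lifted x \<subseteq> component lifted (a \<otimes> x)"
  using assms reachable_mult_left unfolding component_def by blast

lemma graph_iso_components:
  assumes x: "x \<in> carrier G" and y: "y \<in> carrier G"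
  shows "graph_iso (component lifted x) lifted (component lifted y) lifted"
proof -
  define a where "a = y \<otimes> inv x"
  have a: "a \<in> carrier G" "inv a \<in> carrier G" unfolding a_def using x y by auto
  have ax: "a \<otimes> x = y" and ay: "inv a \<otimes> y = x"
    unfolding a_def using x y by (simp_all add: m_assoc inv_mult_group)
  have "bij_betw ((\<otimes>) a) (component lifted x) (component lifted y)"
  proof (rule bij_betw_byWitness[where f' = "(\<otimes>) (inv a)"])
    show "\<forall>z\<in>component lifted x. inv a \<otimes> (a \<otimes> z) = z"
      using a component_subset_carrier[OF x] by (auto simp: m_assoc[symmetric])
    show "\<forall>z\<in>component lifted y. a \<otimes> (inv a \<otimes> z) = z"
      using a component_subset_carrier[OF y] by (auto simp: m_assoc[symmetric])
    show "(\<otimes>) a ` component lifted x \<subseteq> component lifted y"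
      using mult_left_component[OF a(1) x] ax by simp
    show "(\<otimes>) (inv a) ` component lifted y \<subseteq> component lifted x"
      using mult_left_component[OF a(2) y] ay by simp
  qed
  moreover have "\<forall>u\<in>component lifted x. \<forall>v\<in>component lifted x. lifted u v \<longleftrightarrow> lifted (a \<otimes> u) (a \<otimes> v)"
    using component_subset_carrier[OF x] lifted_mult_left_iff[OF a(1)] by auto
  ultimately show ?thesis unfolding graph_iso_def by blast
qed

lemma subgroup_component_one:
  assumes sym: "\<And>i j. E i j \<Longrightarrow> E j i"
  shows "subgroup (component lifted \<one>) G"
proof
  show "component lifted \<one> \<subseteq> carrier G" by (rule component_subset_carrier) simp
  show "\<one> \<in> component lifted \<one>" unfolding component_def by simp
next
  fix a b assume a: "a \<in> component lifted \<one>" and b: "b \<in> component lifted \<one>"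
  have ab: "a \<in> carrier G" "b \<in> carrier G"
    using a b component_subset_carrier[of \<one>] by auto
  have "a \<otimes> b \<in> component lifted (a \<otimes> \<one>)"
    using mult_left_component[OF ab(1) one_closed] b by blast
  with ab have "lifted\<^sup>*\<^sup>* a (a \<otimes> b)" unfolding component_def by simp
  with a show "a \<otimes> b \<in> component lifted \<one>" unfolding component_def by auto
  have "lifted\<^sup>*\<^sup>* a \<one>" using reachable_sym[OF sym] a unfolding component_def by auto
  then have "lifted\<^sup>*\<^sup>* (inv a \<otimes> a) (inv a \<otimes> \<one>)"
    using reachable_mult_left ab(1) by blast
  with ab show "inv a \<in> component lifted \<one>" unfolding component_def by simp
qed

lemma component_one_cayley_graph:
  assumes inj: "inj_on g {..<d}"
    and sym: "\<And>i j. E i j \<Longrightarrow> E j i" and irrefl: "\<And>i. \<not> E i i"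
  shows "is_cayley_graph G (component lifted \<one>) {inv (g i) \<otimes> g j | i j. i < d \<and> j < d \<and> E i j}
           (component lifted \<one>) lifted"
proof -
  define K where "K = component lifted \<one>"
  define S where "S = {inv (g i) \<otimes> g j | i j. i < d \<and> j < d \<and> E i j}"
  have K: "K \<subseteq> carrier G" unfolding K_def by (rule component_subset_carrier) simp
  have "S \<subseteq> K"
  proof
    fix s assume "s \<in> S"
    then obtain i j where h: "i < d" "j < d" "E i j" "s = \<one> \<otimes> inv (g i) \<otimes> g j"
      unfolding S_def by auto
    then have "lifted \<one> s" unfolding lifted_iff by blast
    then show "s \<in> K" unfolding K_def component_def by auto
  qed
  moreover have "\<one> \<notin> S"
  proof
    assume "\<one> \<in> S"
    then obtain i j where h: "i < d" "j < d" "E i j" "\<one> = inv (g i) \<otimes> g j" unfolding S_def by blast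
    then have "g j = g i" using inv_solve_left[of \<one> "g i" "g j"] by simp
    with inj h have "i = j" by (auto dest: inj_onD)
    with h irrefl show False by auto
  qed
  moreover have "\<forall>s\<in>S. inv s \<in> S"
  proof
    fix s assume "s \<in> S"
    then obtain i j where h: "i < d" "j < d" "E i j" "s = inv (g i) \<otimes> g j" unfolding S_def by blast
    then have "inv s = inv (g j) \<otimes> g i" by (simp add: inv_mult_group)
    with h sym show "inv s \<in> S" unfolding S_def by blast
  qed
  moreover have "\<forall>x\<in>K. \<forall>y\<in>K. lifted x y \<longleftrightarrow> inv x \<otimes> y \<in> S"
  proof (intro ballI)
    fix x y assume "x \<in> K" "y \<in> K"
    with K have xy: "x \<in> carrier G" "y \<in> carrier G" by auto
    have "y = x \<otimes> inv (g i) \<otimes> g j \<longleftrightarrow> inv x \<otimes> y = inv (g i) \<otimes> g j" if "i < d" "j < d" for i j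
      using that xy by (simp add: inv_solve_left' m_assoc)
    with xy show "lifted x y \<longleftrightarrow> inv x \<otimes> y \<in> S" unfolding lifted_iff S_def by auto
  qed
  ultimately show ?thesis
    unfolding is_cayley_graph_def K_def S_def using subgroup_component_one[OF sym] by blast
qed

lemma alt_prod_telescoping:
  assumes C: "\<And>k. k \<le> p \<Longrightarrow> C k \<in> carrier G"
    and step: "\<And>k. k < p \<Longrightarrow> g (idx (2 * k)) \<otimes> inv (g (idx (2 * k + 1))) = inv (C k) \<otimes> C (Suc k)"
  shows "alt_prod G g idx p = inv (C 0) \<otimes> C p"
proof -
  let ?f = "\<lambda>k acc. g (idx (2 * k)) \<otimes> inv (g (idx (2 * k + 1))) \<otimes> acc"
  have "m \<le> p \<Longrightarrow> foldr ?f [m..<p] \<one> = inv (C m) \<otimes> C p" for m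
  proof (induction "p - m" arbitrary: m)
    case 0
    then show ?case using C by simp
  next
    case (Suc x)
    then have mp: "m < p" by simp
    have c: "C m \<in> carrier G" "C (Suc m) \<in> carrier G" "C p \<in> carrier G" using C mp by auto
    have "foldr ?f [m..<p] \<one> = inv (C m) \<otimes> C (Suc m) \<otimes> (inv (C (Suc m)) \<otimes> C p)"
      using mp Suc step[OF mp] by (simp add: upt_conv_Cons)
    also have "\<dots> = inv (C m) \<otimes> ((C (Suc m) \<otimes> inv (C (Suc m))) \<otimes> C p)"
      using c by (simp only: m_assoc inv_closed m_closed)
    also have "\<dots> = inv (C m) \<otimes> C p" using c by simp
    finally show ?case .
  qed
  then show ?thesis unfolding alt_prod_def by simp
qed

lemma alt_prod_cycle_eq_one:
  assumes l: "0 < l"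
    and c: "\<And>k. k < l \<Longrightarrow> c k \<in> carrier G"
    and ab: "\<And>k. k < l \<Longrightarrow> a k < d \<and> b k < d"
    and shared: "\<And>k. k < l \<Longrightarrow> c ((k + l - 1) mod l) \<otimes> g (a k) = c k \<otimes> g (b k)"
  shows "alt_prod G g (interleave a b) l = \<one>"
proof -
  define C where "C k = c ((k + l - 1) mod l)" for k
  have C: "C k \<in> carrier G" for k unfolding C_def using c l by simp
  have C_Suc: "C (Suc k) = c k" if "k < l" for k
  proof -
    have "Suc k + l - 1 = k + l" by simp
    with that show ?thesis unfolding C_def by simp
  qed
  have "alt_prod G g (interleave a b) l = inv (C 0) \<otimes> C l"
  proof (rule alt_prod_telescoping[OF C])
    fix k assume k: "k < l"
    with shared C_Suc have "C (Suc k) \<otimes> g (b k) = C k \<otimes> g (a k)" unfolding C_def by simp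
    from mult_eq_imp_quotients_eq[OF C C _ _ this] ab k
    show "g (interleave a b (2 * k)) \<otimes> inv (g (interleave a b (2 * k + 1))) = inv (C k) \<otimes> C (Suc k)"
      unfolding interleave_def by simp
  qed
  also have "C l = C 0"
  proof -
    have "l + l - 1 = (l - 1) + l" using l by simp
    then show ?thesis unfolding C_def by simp
  qed
  finally show ?thesis using C by simp
qed

lemma cond_R_imp_no_cluster_cycle:
  assumes R: "cond_R G g d l" and l: "2 \<le> l"
  shows "\<not> cluster_cycle (carrier G) (part G g d) l"
proof
  assume "cluster_cycle (carrier G) (part G g d) l"
  then obtain v c where inj_v: "inj_on v {..<l}" and inj_c: "inj_on c {..<l}"
    and vc: "\<forall>k<l. c k \<in> carrier G \<and> v k \<in> part G g d (c ((k + l - 1) mod l)) \<and> v k \<in> part G g d (c k)"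
    unfolding cluster_cycle_def by blast
  have "\<forall>k. \<exists>i. k < l \<longrightarrow> i < d \<and> v k = c ((k + l - 1) mod l) \<otimes> g i"
    using vc unfolding part_def by blast
  then obtain a where a: "\<And>k. k < l \<Longrightarrow> a k < d \<and> v k = c ((k + l - 1) mod l) \<otimes> g (a k)" by metis
  have "\<forall>k. \<exists>i. k < l \<longrightarrow> i < d \<and> v k = c k \<otimes> g i"
    using vc unfolding part_def by blast
  then obtain b where b: "\<And>k. k < l \<Longrightarrow> b k < d \<and> v k = c k \<otimes> g (b k)" by metis
  have "alt_prod G g (interleave a b) l = \<one>"
  proof (rule alt_prod_cycle_eq_one)
    fix k assume "k < l"
    with vc a b show "c k \<in> carrier G" "a k < d \<and> b k < d"
      and "c ((k + l - 1) mod l) \<otimes> g (a k) = c k \<otimes> g (b k)" by metis+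
  qed (use l in simp)
  moreover have "\<forall>m<2 * l. interleave a b m < d" unfolding interleave_def using a b by auto
  ultimately obtain m where "m < 2 * l" "interleave a b m = interleave a b ((m + 1) mod (2 * l))"
    using R unfolding cond_R_def by blast
  moreover have "a k \<noteq> b k" if k: "k < l" for k
  proof
    assume "a k = b k"
    with a b k have "c ((k + l - 1) mod l) \<otimes> g (a k) = c k \<otimes> g (a k)" by metis
    moreover have "c ((k + l - 1) mod l) \<in> carrier G" "c k \<in> carrier G" "g (a k) \<in> carrier G"
      using vc a k l by auto
    ultimately have "c ((k + l - 1) mod l) = c k" by simp
    with inj_c k have "(k + l - 1) mod l = k" by (auto dest: inj_onD)
    with pred_mod_neq l k show False by blast
  qed
  moreover have "b k \<noteq> a (Suc k mod l)" if k: "k < l" for k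
  proof
    assume "b k = a (Suc k mod l)"
    moreover have "(Suc k mod l + l - 1) mod l = k"
    proof (cases "Suc k < l")
      case False
      with k have "Suc k = l" by simp
      then show ?thesis by auto
    qed simp
    moreover have "Suc k mod l < l" using l by simp
    ultimately have "v k = v (Suc k mod l)" using a b k by metis
    with inj_v k l have "Suc k mod l = k" by (auto dest: inj_onD)
    with Suc_mod_neq l k show False by blast
  qed
  ultimately show False using interleave_adjacent_neq by blast
qed

lemma cluster_girth_ge:
  assumes "cond_G G g d p"
  shows "enat (p + 1) \<le> cluster_girth (carrier G) (part G g d)"
  unfolding cluster_girth_def
proof (rule INF_greatest)
  fix l assume "l \<in> {l. 3 \<le> l \<and> cluster_cycle (carrier G) (part G g d) l}"
  then have l: "3 \<le> l" "cluster_cycle (carrier G) (part G g d) l" by auto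
  show "enat (p + 1) \<le> enat l"
  proof (rule ccontr)
    assume "\<not> enat (p + 1) \<le> enat l"
    with l assms have "cond_R G g d l" unfolding cond_G_def by simp
    with l cond_R_imp_no_cluster_cycle show False by simp
  qed
qed

lemma mult_gen_eq_iff:
  assumes "inj_on g {..<d}" "\<gamma> \<in> carrier G" "i < d" "j < d"
  shows "\<gamma> \<otimes> g i = \<gamma> \<otimes> g j \<longleftrightarrow> i = j"
  using assms by (auto dest: inj_onD)

lemma part_subset_carrier: "\<gamma> \<in> carrier G \<Longrightarrow> part G g d \<gamma> \<subseteq> carrier G"
  unfolding part_def by auto

lemma carrier_eq_UN_part:
  assumes "0 < d"
  shows "carrier G = (\<Union>\<gamma>\<in>carrier G. part G g d \<gamma>)"
proof
  show "carrier G \<subseteq> (\<Union>\<gamma>\<in>carrier G. part G g d \<gamma>)"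
  proof
    fix x assume x: "x \<in> carrier G"
    with assms have "x = (x \<otimes> inv (g 0)) \<otimes> g 0" by (simp add: m_assoc)
    with assms have "x \<in> part G g d (x \<otimes> inv (g 0))" unfolding part_def by blast
    with assms x show "x \<in> (\<Union>\<gamma>\<in>carrier G. part G g d \<gamma>)" by auto
  qed
qed (use part_subset_carrier in blast)

lemma lifted_within_part:
  assumes "lifted x y"
  shows "\<exists>\<gamma>\<in>carrier G. x \<in> part G g d \<gamma> \<and> y \<in> part G g d \<gamma>"
  using assms unfolding lift_edges_def part_def by blast

lemma parts_share_at_most_one_vertex:
  assumes R: "cond_R G g d 2" and "\<gamma> \<in> carrier G" "\<delta> \<in> carrier G" "\<gamma> \<noteq> \<delta>"
    and "u \<in> part G g d \<gamma> \<inter> part G g d \<delta>" "w \<in> part G g d \<gamma> \<inter> part G g d \<delta>"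
  shows "u = w"
proof (rule ccontr)
  assume "u \<noteq> w"
  with assms have "cluster_cycle (carrier G) (part G g d) 2"
    unfolding cluster_cycle_def
    by (intro exI[of _ "\<lambda>k. if k = 0 then u else w"] exI[of _ "\<lambda>k. if k = 0 then \<gamma> else \<delta>"])
      (auto simp: inj_on_def less_2_cases_iff)
  with cond_R_imp_no_cluster_cycle[OF R] show False by simp
qed

lemma is_cluster_parts:
  assumes "cond_R G g d 2" and "0 < d"
  shows "is_cluster (carrier G) lifted (carrier G) (part G g d)"
proof -
  have "part G g d \<gamma> \<inter> part G g d \<delta> = {} \<or> (\<exists>v. part G g d \<gamma> \<inter> part G g d \<delta> = {v})"
    if "\<gamma> \<in> carrier G" "\<delta> \<in> carrier G" "\<gamma> \<noteq> \<delta>" for \<gamma> \<delta>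
    using parts_share_at_most_one_vertex[OF assms(1) that] by blast
  then show ?thesis unfolding is_cluster_def
    using part_subset_carrier carrier_eq_UN_part[OF assms(2)] lifted_within_part by blast
qed

lemma inj_on_part:
  assumes R: "cond_R G g d 2" and inj: "inj_on g {..<d}" and "0 < d"
  shows "inj_on (part G g d) (carrier G)"
proof
  fix \<gamma> \<delta> assume \<gamma>: "\<gamma> \<in> carrier G" and \<delta>: "\<delta> \<in> carrier G"
    and eq: "part G g d \<gamma> = part G g d \<delta>"
  show "\<gamma> = \<delta>"
  proof (cases "d = 1")
    case True
    with eq have "{\<gamma> \<otimes> g 0} = {\<delta> \<otimes> g 0}" unfolding part_def by (simp add: lessThan_Suc)
    with \<gamma> \<delta> True show ?thesis by simp
  next
    case False
    with assms(3) have "\<gamma> \<otimes> g 0 \<in> part G g d \<gamma>" "\<gamma> \<otimes> g 1 \<in> part G g d \<gamma>"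
      unfolding part_def by auto
    moreover have "\<gamma> \<otimes> g 0 \<noteq> \<gamma> \<otimes> g 1"
      using mult_gen_eq_iff[OF inj \<gamma>, of 0 1] False assms(3) by simp
    ultimately show ?thesis
      using parts_share_at_most_one_vertex[OF R \<gamma> \<delta>] eq by blast
  qed
qed

lemma graph_iso_part:
  assumes R: "cond_R G g d 2" and inj: "inj_on g {..<d}" and irrefl: "\<And>i. \<not> E i i"
    and \<gamma>: "\<gamma> \<in> carrier G"
  shows "graph_iso {..<d} E (part G g d \<gamma>) lifted"
proof -
  have "bij_betw (\<lambda>i. \<gamma> \<otimes> g i) {..<d} (part G g d \<gamma>)"
    unfolding bij_betw_def part_def inj_on_def using mult_gen_eq_iff[OF inj \<gamma>] by auto
  moreover have "E i j \<longleftrightarrow> lifted (\<gamma> \<otimes> g i) (\<gamma> \<otimes> g j)" if ij: "i < d" "j < d" for i j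
  proof
    assume "E i j"
    with \<gamma> ij show "lifted (\<gamma> \<otimes> g i) (\<gamma> \<otimes> g j)" unfolding lift_edges_def by blast
  next
    assume "lifted (\<gamma> \<otimes> g i) (\<gamma> \<otimes> g j)"
    then obtain \<delta> k l where h: "\<delta> \<in> carrier G" "k < d" "l < d" "E k l"
      "\<gamma> \<otimes> g i = \<delta> \<otimes> g k" "\<gamma> \<otimes> g j = \<delta> \<otimes> g l"
      unfolding lift_edges_def by blast
    show "E i j"
    proof (cases "i = j")
      case True
      with h mult_gen_eq_iff[OF inj] irrefl show ?thesis by metis
    next
      case False
      then have "\<gamma> \<otimes> g i \<noteq> \<gamma> \<otimes> g j" using mult_gen_eq_iff[OF inj \<gamma> ij] by simp
      moreover have "\<gamma> \<otimes> g i \<in> part G g d \<gamma>" "\<gamma> \<otimes> g j \<in> part G g d \<gamma>"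
        using ij unfolding part_def by auto
      moreover have "\<gamma> \<otimes> g i \<in> part G g d \<delta>" "\<gamma> \<otimes> g j \<in> part G g d \<delta>"
        using h(2,3) unfolding h(5,6) part_def by auto
      ultimately have "\<gamma> = \<delta>" using parts_share_at_most_one_vertex[OF R \<gamma> h(1)] by blast
      with h ij mult_gen_eq_iff[OF inj \<gamma>] have "k = i" "l = j" by auto
      with h show ?thesis by simp
    qed
  qed
  ultimately show ?thesis unfolding graph_iso_def part_def by auto
qed

end

theorem proposition5p3:
  fixes G :: "('a, 'b) monoid_scheme" and g :: "nat \<Rightarrow> 'a"
    and d :: nat and E :: "nat \<Rightarrow> nat \<Rightarrow> bool"
  assumes "group G" and "finite (carrier G)"
    and "simple_graph_on d E" and "connected_graph_on d E"
    and "g ` {..<d} \<subseteq> carrier G" and "inj_on g {..<d}"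
  shows
    "(cond_G G g d 2 \<longrightarrow>
        is_cluster (carrier G) (lift_edges G g d E) (carrier G) (part G g d)
        \<and> inj_on (part G g d) (carrier G)
        \<and> (\<forall>\<gamma>\<in>carrier G. graph_iso {..<d} E (part G g d \<gamma>) (lift_edges G g d E)))
     \<and> (\<forall>p\<ge>1. cond_G G g d p \<longrightarrow>
          cluster_girth (carrier G) (part G g d) \<ge> enat (p + 1))
     \<and> (\<forall>x\<in>carrier G. \<forall>y\<in>carrier G.
          graph_iso (component (lift_edges G g d E) x) (lift_edges G g d E)
                    (component (lift_edges G g d E) y) (lift_edges G g d E))
     \<and> (\<exists>K S. is_cayley_graph G K S (component (lift_edges G g d E) \<one>\<^bsub>G\<^esub>) (lift_edges G g d E))"
proof -
  interpret lifted_graph G g d E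
    using assms(1,5) by (rule lifted_graph.intro[OF _ lifted_graph_axioms.intro])
  have sym: "\<And>i j. E i j \<Longrightarrow> E j i" and irrefl: "\<And>i. \<not> E i i"
    using assms(3) unfolding simple_graph_on_def by blast+
  have d: "0 < d" using assms(4) unfolding connected_graph_on_def by blast
  have R2: "cond_G G g d 2 \<Longrightarrow> cond_R G g d 2" unfolding cond_G_def by simp
  show ?thesis
    using is_cluster_parts[OF R2 d] inj_on_part[OF R2 assms(6) d] graph_iso_part[OF R2 assms(6) irrefl]
      cluster_girth_ge graph_iso_components component_one_cayley_graph[OF assms(6) sym irrefl]
    by blast
qed

end
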